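(* Let $\mathcal{M}=((X,\mathcal{C}_R),\mathcal{V})$ be a quasi-discrete closure model based on $R$ that is finitely closed and finitely backward closed, viewed as the $\mathcal{T}$-coalgebra $(X,\eta)$ with $\eta(x)=(\mathcal{V}^{-1}(x),\vec{\mathcal{C}}(x),\overleftarrow{\mathcal{C}}(x))$. For all $x_1,x_2\in X$: $x_1\simeq x_2$ iff $x_1$ and $x_2$ are behaviourally equivalent with respect to $\mathcal{T}$.
   Context: $\mathcal{C}_R(A)=A\cup\{x\mid\exists a\in A.\ aRx\}$, $\vec{\mathcal{C}}(x)=\mathcal{C}_R(\{x\})$, $\overleftarrow{\mathcal{C}}(x)=\mathcal{C}_{R^{-1}}(\{x\})$, $\mathcal{V}^{-1}(x)=\{p\in AP\mid x\in\mathcal{V}(p)\}$. Class-based bisimulation: a non-empty equivalence relation $B$ such that $(x_1,x_2)\in B$ implies $\mathcal{V}^{-1}(x_1)=\mathcal{V}^{-1}(x_2)$ and for all $C\in X/B$, $\vec{\mathcal{C}}(x_1)\cap C\neq\emptyset\iff\vec{\mathcal{C}}(x_2)\cap C\neq\emptyset$ and $\overleftarrow{\mathcal{C}}(x_1)\cap C\neq\emptyset\iff\overleftarrow{\mathcal{C}}(x_2)\cap C\neq\emptyset$; $\simeq$ is the union of such relations. $\mathcal{T}X=\mathcal{P}_{fin}(AP)\times\mathcal{P}_{fin}(X)\times\mathcal{P}_{fin}(X)$, $(\mathcal{T}f)(v,z,z')=(v,f[z],f[z'])$; behavioural equivalence means equal images under the unique homomorphism to the final $\mathcal{T}$-coalgebra.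 *)

theory Defs
  imports Main
begin

definition qdcm :: "'x set \<Rightarrow> ('x \<times> 'x) set \<Rightarrow> ('ap \<Rightarrow> 'x set) \<Rightarrow> bool" where
  "qdcm X R V \<longleftrightarrow> R \<subseteq> X \<times> X \<and> (\<forall>p. V p \<subseteq> X)"

definition closR :: "('x \<times> 'x) set \<Rightarrow> 'x set \<Rightarrow> 'x set" where
  "closR R A = A \<union> {x. \<exists>a\<in>A. (a, x) \<in> R}"

definition fwd_clos :: "('x \<times> 'x) set \<Rightarrow> 'x \<Rightarrow> 'x set" where
  "fwd_clos R x = closR R {x}"

definition bwd_clos :: "('x \<times> 'x) set \<Rightarrow> 'x \<Rightarrow> 'x set" where
  "bwd_clos R x = closR (R\<inverse>) {x}"

definition Vinv :: "('ap \<Rightarrow> 'x set) \<Rightarrow> 'x \<Rightarrow> 'ap set" where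
  "Vinv V x = {p. x \<in> V p}"

definition finitely_closed :: "'x set \<Rightarrow> ('x \<times> 'x) set \<Rightarrow> bool" where
  "finitely_closed X R \<longleftrightarrow> (\<forall>x\<in>X. finite (fwd_clos R x))"

definition finitely_backward_closed :: "'x set \<Rightarrow> ('x \<times> 'x) set \<Rightarrow> bool" where
  "finitely_backward_closed X R \<longleftrightarrow> (\<forall>x\<in>X. finite (bwd_clos R x))"

definition cb_bisim :: "'x set \<Rightarrow> ('x \<times> 'x) set \<Rightarrow> ('ap \<Rightarrow> 'x set) \<Rightarrow> ('x \<times> 'x) set \<Rightarrow> bool" where
  "cb_bisim X R V B \<longleftrightarrow> B \<noteq> {} \<and> equiv X B \<and>
     (\<forall>(x1, x2)\<in>B. Vinv V x1 = Vinv V x2 \<and>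
        (\<forall>C\<in>X // B.
           (fwd_clos R x1 \<inter> C \<noteq> {} \<longleftrightarrow> fwd_clos R x2 \<inter> C \<noteq> {}) \<and>
           (bwd_clos R x1 \<inter> C \<noteq> {} \<longleftrightarrow> bwd_clos R x2 \<inter> C \<noteq> {})))"

definition cb_bisimilar :: "'x set \<Rightarrow> ('x \<times> 'x) set \<Rightarrow> ('ap \<Rightarrow> 'x set) \<Rightarrow> ('x \<times> 'x) set" where
  "cb_bisimilar X R V = \<Union> {B. cb_bisim X R V B}"

definition Tobj :: "'y set \<Rightarrow> ('ap set \<times> 'y set \<times> 'y set) set" where
  "Tobj Y = {(v, z, z'). finite v \<and> finite z \<and> z \<subseteq> Y \<and> finite z' \<and> z' \<subseteq> Y}"

definition Tmap :: "('x \<Rightarrow> 'y) \<Rightarrow> ('ap set \<times> 'x set \<times> 'x set) \<Rightarrow> ('ap set \<times> 'y set \<times> 'y set)" where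
  "Tmap f t = (case t of (v, z, z') \<Rightarrow> (v, f ` z, f ` z'))"

definition T_coalg :: "'y set \<Rightarrow> ('y \<Rightarrow> 'ap set \<times> 'y set \<times> 'y set) \<Rightarrow> bool" where
  "T_coalg Y \<gamma> \<longleftrightarrow> (\<forall>y\<in>Y. \<gamma> y \<in> Tobj Y)"

definition T_hom :: "'x set \<Rightarrow> ('x \<Rightarrow> 'ap set \<times> 'x set \<times> 'x set) \<Rightarrow>
                     'y set \<Rightarrow> ('y \<Rightarrow> 'ap set \<times> 'y set \<times> 'y set) \<Rightarrow> ('x \<Rightarrow> 'y) \<Rightarrow> bool" where
  "T_hom X \<eta> Y \<gamma> f \<longleftrightarrow> (\<forall>x\<in>X. f x \<in> Y \<and> Tmap f (\<eta> x) = \<gamma> (f x))"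

definition eta :: "('x \<times> 'x) set \<Rightarrow> ('ap \<Rightarrow> 'x set) \<Rightarrow> 'x \<Rightarrow> 'ap set \<times> 'x set \<times> 'x set" where
  "eta R V x = (Vinv V x, fwd_clos R x, bwd_clos R x)"

text \<open>Behavioural equivalence: identified by some T-coalgebra homomorphism out of (X, eta).
  (Equivalent to equality of images under the unique map into the final T-coalgebra;
  every homomorphic image of (X, eta) is isomorphic to one carried by a set of
  subsets of X, so the target carrier type 'x set suffices.)\<close>

definition beh_equiv :: "'x set \<Rightarrow> ('x \<times> 'x) set \<Rightarrow> ('ap \<Rightarrow> 'x set) \<Rightarrow> 'x \<Rightarrow> 'x \<Rightarrow> bool" where
  "beh_equiv X R V x1 x2 \<longleftrightarrow>
     (\<exists>(Y :: 'x set set) \<gamma> f. T_coalg Y \<gamma> \<and> T_hom X (eta R V) Y \<gamma> f \<and> f x1 = f x2)"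

end

theory Submission
  imports Defs
begin

text \<open>For an equivalence B on X, the set of B-classes met by a set S \<subseteq> X is the image of S
  under the projection x \<mapsto> [x]_B. Hence B is a class-based bisimulation iff
  Tmap [-]_B \<circ> eta is constant on B-classes, i.e. iff eta descends to a T-coalgebra on X/B
  for which the projection is a homomorphism; the finiteness hypotheses make the quotient
  structure land in the finite powersets. Conversely, the image of a set under a map only
  depends on the kernel of the map, so the kernel of any homomorphism out of (X, eta) is a
  class-based bisimulation.\<close>

lemma fwd_clos_subset: "R \<subseteq> X \<times> X \<Longrightarrow> x \<in> X \<Longrightarrow> fwd_clos R x \<subseteq> X"
  unfolding fwd_clos_def closR_def by auto

lemma bwd_clos_subset: "R \<subseteq> X \<times> X \<Longrightarrow> x \<in> X \<Longrightarrow> bwd_clos R x \<subseteq> X"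
  unfolding bwd_clos_def closR_def by auto

lemma T_coalg_eta:
  assumes "qdcm X R V" "finitely_closed X R" "finitely_backward_closed X R"
    and "\<forall>x\<in>X. finite (Vinv V x)"
  shows "T_coalg X (eta R V)"
proof -
  have RX: "R \<subseteq> X \<times> X" using assms(1) unfolding qdcm_def by blast
  show ?thesis
    using assms(2-4) fwd_clos_subset[OF RX] bwd_clos_subset[OF RX]
    unfolding T_coalg_def Tobj_def eta_def finitely_closed_def finitely_backward_closed_def
    by simp
qed

lemma Tmap_in_Tobj: "t \<in> Tobj X \<Longrightarrow> f ` X \<subseteq> Y \<Longrightarrow> Tmap f t \<in> Tobj Y"
  unfolding Tobj_def Tmap_def by auto

lemma T_coalg_hom_image:
  assumes "T_coalg X \<eta>" "T_hom X \<eta> Y \<gamma> f" "Y \<subseteq> f ` X"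
  shows "T_coalg Y \<gamma>"
  unfolding T_coalg_def
proof
  fix y assume "y \<in> Y"
  then obtain x where x: "x \<in> X" "y = f x" using assms(3) by blast
  have "f ` X \<subseteq> Y" using assms(2) unfolding T_hom_def by blast
  then have "Tmap f (\<eta> x) \<in> Tobj Y"
    using assms(1) x(1) unfolding T_coalg_def by (blast intro: Tmap_in_Tobj)
  then show "\<gamma> y \<in> Tobj Y" using assms(2) x unfolding T_hom_def by simp
qed

lemma Tmap_eta_eq_iff [simp]:
  "Tmap f (eta R V x) = Tmap f (eta R V x') \<longleftrightarrow>
     Vinv V x = Vinv V x' \<and> f ` fwd_clos R x = f ` fwd_clos R x' \<and>
     f ` bwd_clos R x = f ` bwd_clos R x'"
  unfolding Tmap_def eta_def by simp

lemma proj_image_eq_classes_meeting: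
  assumes "equiv X B" "S \<subseteq> X"
  shows "Equiv_Relations.proj B ` S = {C \<in> X // B. S \<inter> C \<noteq> {}}"
proof (intro equalityI subsetI)
  fix C assume "C \<in> Equiv_Relations.proj B ` S"
  then obtain y where y: "y \<in> S" "C = Equiv_Relations.proj B y" by blast
  with assms(2) have "y \<in> X" by blast
  then have "C \<in> X // B" "y \<in> C"
    unfolding y(2) Equiv_Relations.proj_def
    by (rule quotientI, rule equiv_class_self[OF assms(1)])
  with y(1) show "C \<in> {C \<in> X // B. S \<inter> C \<noteq> {}}" by blast
next
  fix C assume "C \<in> {C \<in> X // B. S \<inter> C \<noteq> {}}"
  then obtain y where y: "y \<in> S" "y \<in> C" and "C \<in> X // B" by blast
  from \<open>C \<in> X // B\<close> obtain a where a: "C = B `` {a}" by (rule quotientE)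
  with y(2) have "B `` {a} = B `` {y}" by (intro equiv_class_eq[OF assms(1)]) simp
  with a y(1) show "C \<in> Equiv_Relations.proj B ` S"
    unfolding Equiv_Relations.proj_def by blast
qed

lemma proj_image_eq_iff_meets_same_classes:
  assumes "equiv X B" "S \<subseteq> X" "S' \<subseteq> X"
  shows "Equiv_Relations.proj B ` S = Equiv_Relations.proj B ` S' \<longleftrightarrow>
           (\<forall>C\<in>X // B. S \<inter> C \<noteq> {} \<longleftrightarrow> S' \<inter> C \<noteq> {})"
  using assms by (auto simp: proj_image_eq_classes_meeting)

lemma image_eq_iff_if_same_kernel:
  assumes "S \<subseteq> X" "S' \<subseteq> X" "\<And>x x'. x \<in> X \<Longrightarrow> x' \<in> X \<Longrightarrow> h x = h x' \<longleftrightarrow> f x = f x'"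
  shows "h ` S = h ` S' \<longleftrightarrow> f ` S = f ` S'"
proof -
  have "h ` A \<subseteq> h ` A' \<longleftrightarrow> f ` A \<subseteq> f ` A'" if "A \<subseteq> X" "A' \<subseteq> X" for A A'
  proof -
    have "h ` A \<subseteq> h ` A' \<longleftrightarrow> (\<forall>a\<in>A. \<exists>a'\<in>A'. h a = h a')" by blast
    also have "\<dots> \<longleftrightarrow> (\<forall>a\<in>A. \<exists>a'\<in>A'. f a = f a')"
      using that by (intro ball_cong bex_cong refl assms(3)) blast+
    also have "\<dots> \<longleftrightarrow> f ` A \<subseteq> f ` A'" by blast
    finally show ?thesis .
  qed
  with assms(1,2) show ?thesis by (simp add: set_eq_subset)
qed

lemma cb_bisim_iff_Tmap_proj_eq:
  assumes "R \<subseteq> X \<times> X" "equiv X B"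
  shows "cb_bisim X R V B \<longleftrightarrow> B \<noteq> {} \<and>
           (\<forall>(x, x')\<in>B. Tmap (Equiv_Relations.proj B) (eta R V x) =
                        Tmap (Equiv_Relations.proj B) (eta R V x'))"
proof -
  have pointwise:
    "(case p of (x, x') \<Rightarrow> Vinv V x = Vinv V x' \<and>
      (\<forall>C\<in>X // B. (fwd_clos R x \<inter> C \<noteq> {} \<longleftrightarrow> fwd_clos R x' \<inter> C \<noteq> {}) \<and>
                   (bwd_clos R x \<inter> C \<noteq> {} \<longleftrightarrow> bwd_clos R x' \<inter> C \<noteq> {}))) \<longleftrightarrow>
     (case p of (x, x') \<Rightarrow>
       Tmap (Equiv_Relations.proj B) (eta R V x) = Tmap (Equiv_Relations.proj B) (eta R V x'))"
    if "p \<in> B" for p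
  proof -
    obtain x x' where p: "p = (x, x')" by fastforce
    have "x \<in> X" "x' \<in> X" using assms(2) that unfolding p equiv_def refl_on_def by blast+
    then show ?thesis
      unfolding p prod.case
      using proj_image_eq_iff_meets_same_classes[OF assms(2)]
        fwd_clos_subset[OF assms(1)] bwd_clos_subset[OF assms(1)]
      by (simp add: ball_conj_distrib)
  qed
  show ?thesis
    unfolding cb_bisim_def using assms(2) ball_cong[OF refl pointwise, of B] by simp
qed

text \<open>The class C is evaluated at an arbitrary representative, which is harmless
  when Tmap [-]_B \<circ> \<eta> is constant on B-classes.\<close>

definition quotient_coalg ::
  "('x \<times> 'x) set \<Rightarrow> ('x \<Rightarrow> 'ap set \<times> 'x set \<times> 'x set) \<Rightarrow>
   'x set \<Rightarrow> 'ap set \<times> 'x set set \<times> 'x set set" where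
  "quotient_coalg B \<eta> C = Tmap (Equiv_Relations.proj B) (\<eta> (SOME x. x \<in> C))"

lemma T_hom_proj_quotient_coalg:
  assumes "equiv X B"
    and "\<And>x x'. (x, x') \<in> B \<Longrightarrow>
           Tmap (Equiv_Relations.proj B) (\<eta> x) = Tmap (Equiv_Relations.proj B) (\<eta> x')"
  shows "T_hom X \<eta> (X // B) (quotient_coalg B \<eta>) (Equiv_Relations.proj B)"
  unfolding T_hom_def
proof (intro ballI conjI)
  fix x assume x: "x \<in> X"
  then show "Equiv_Relations.proj B x \<in> X // B" by (rule proj_preserves)
  have "x \<in> Equiv_Relations.proj B x"
    unfolding Equiv_Relations.proj_def by (rule equiv_class_self[OF assms(1) x])
  then have "(SOME y. y \<in> Equiv_Relations.proj B x) \<in> Equiv_Relations.proj B x" by (rule someI)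
  then have "(x, SOME y. y \<in> Equiv_Relations.proj B x) \<in> B"
    unfolding Equiv_Relations.proj_def by blast
  then show "Tmap (Equiv_Relations.proj B) (\<eta> x) =
             quotient_coalg B \<eta> (Equiv_Relations.proj B x)"
    unfolding quotient_coalg_def by (rule assms(2))
qed

lemma beh_equiv_if_cb_bisim:
  assumes "R \<subseteq> X \<times> X" "T_coalg X (eta R V)" "cb_bisim X R V B" "(x1, x2) \<in> B"
  shows "beh_equiv X R V x1 x2"
proof -
  have equiv: "equiv X B" using assms(3) unfolding cb_bisim_def by blast
  have "\<forall>(x, x')\<in>B. Tmap (Equiv_Relations.proj B) (eta R V x) =
                    Tmap (Equiv_Relations.proj B) (eta R V x')"
    using assms(3) unfolding cb_bisim_iff_Tmap_proj_eq[OF assms(1) equiv] by blast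
  then have hom:
    "T_hom X (eta R V) (X // B) (quotient_coalg B (eta R V)) (Equiv_Relations.proj B)"
    by (intro T_hom_proj_quotient_coalg[OF equiv]) blast
  have "T_coalg (X // B) (quotient_coalg B (eta R V))"
    by (rule T_coalg_hom_image[OF assms(2) hom]) (simp add: proj_image)
  moreover have "{x1, x2} \<subseteq> X" using assms(4) equiv_type[OF equiv] by blast
  then have "Equiv_Relations.proj B x1 = Equiv_Relations.proj B x2"
    using proj_iff[OF equiv] assms(4) by simp
  ultimately show ?thesis unfolding beh_equiv_def using hom by blast
qed

lemma cb_bisim_kernel_of_hom:
  assumes "R \<subseteq> X \<times> X" "X \<noteq> {}" "T_hom X (eta R V) Y \<gamma> f"
  shows "cb_bisim X R V (Restr (kernel f) X)"
proof -
  let ?K = "Restr (kernel f) X"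
  have equiv: "equiv X ?K"
    unfolding kernel_def equiv_def refl_on_def sym_def trans_def by auto
  have same_kernel:
    "Equiv_Relations.proj ?K x = Equiv_Relations.proj ?K x' \<longleftrightarrow> f x = f x'"
    if "x \<in> X" "x' \<in> X" for x x'
    using proj_iff[OF equiv] that by (simp add: kernel_def)
  have "Tmap (Equiv_Relations.proj ?K) (eta R V x) = Tmap (Equiv_Relations.proj ?K) (eta R V x')"
    if "(x, x') \<in> ?K" for x x'
  proof -
    from that have x: "x \<in> X" "x' \<in> X" "f x = f x'" by (auto simp: kernel_def)
    with assms(3) have "Tmap f (eta R V x) = Tmap f (eta R V x')"
      unfolding T_hom_def by metis
    moreover have
      "Equiv_Relations.proj ?K ` S = Equiv_Relations.proj ?K ` S' \<longleftrightarrow> f ` S = f ` S'"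
      if "S \<subseteq> X" "S' \<subseteq> X" for S S'
      by (rule image_eq_iff_if_same_kernel[OF that same_kernel])
    ultimately show ?thesis
      using x fwd_clos_subset[OF assms(1)] bwd_clos_subset[OF assms(1)] by simp
  qed
  moreover have "?K \<noteq> {}" using assms(2) by (auto simp: kernel_def)
  ultimately show ?thesis using cb_bisim_iff_Tmap_proj_eq[OF assms(1) equiv] by blast
qed

theorem corollary1:
  fixes X :: "'x set" and R :: "('x \<times> 'x) set" and V :: "'ap \<Rightarrow> 'x set"
  assumes "qdcm X R V"
    and "finitely_closed X R"
    and "finitely_backward_closed X R"
    and "\<forall>x\<in>X. finite (Vinv V x)"
    and "x1 \<in> X" and "x2 \<in> X"
  shows "(x1, x2) \<in> cb_bisimilar X R V \<longleftrightarrow> beh_equiv X R V x1 x2"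
proof -
  have RX: "R \<subseteq> X \<times> X" using assms(1) unfolding qdcm_def by blast
  show ?thesis
  proof
    assume "(x1, x2) \<in> cb_bisimilar X R V"
    then obtain B where "cb_bisim X R V B" "(x1, x2) \<in> B"
      unfolding cb_bisimilar_def by blast
    moreover have "T_coalg X (eta R V)" using assms(1-4) by (rule T_coalg_eta)
    ultimately show "beh_equiv X R V x1 x2" using RX by (blast intro: beh_equiv_if_cb_bisim)
  next
    assume "beh_equiv X R V x1 x2"
    then obtain Y :: "'x set set" and \<gamma> f where "T_hom X (eta R V) Y \<gamma> f" "f x1 = f x2"
      unfolding beh_equiv_def by blast
    moreover have "X \<noteq> {}" using assms(5) by blast
    ultimately have "cb_bisim X R V (Restr (kernel f) X)" "(x1, x2) \<in> Restr (kernel f) X"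
      using RX cb_bisim_kernel_of_hom assms(5,6) by (blast, simp add: kernel_def)
    then show "(x1, x2) \<in> cb_bisimilar X R V" unfolding cb_bisimilar_def by blast
  qed
qed

end
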